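(* Let $G,H\in\mathfrak{D}$ and $\xi\in\mathcal{H}(G,H)$. For every $H'\in\mathfrak{D}$ let $$\Theta_{G,H'}(\xi)=\{\zeta\in\mathcal{H}(G,H'):\mathcal{G}(\zeta)=\mathcal{G}(\xi)\}.$$ Then $\#\Theta_{G,H'}(\xi)=\#\mathcal{S}(\mathcal{G}(\xi),H')$ for every $H'\in\mathfrak{D}$.
   Context: **Digraphs and homomorphisms.** - A digraph $G$ is a pair $(V(G),A(G))$, where $V(G)$ is a finite non-empty set and $A(G)\subseteq V(G)\times V(G)$. Arcs are written $vw$. - An arc $vw$ with $v\ne w$ is proper. - A homomorphism $\xi:G\to H$ is a map $V(G)\to V(H)$ with $\xi(v)\xi(w)\in A(H)$ for all $vw\in A(G)$. $\mathcal{H}(G,H)$ is the set of homomorphisms. - A homomorphism is strict if it maps every proper arc to a proper arc. $\mathcal{S}(G,H)$ is the set of strict homomorphisms. - $\mathfrak{D}$ is the class of all digraphs. **Connectivity.** - Two vertices $u,w$ are adjacent if $uw\in A(G)$ or $wu\in A(G)$. - For $X\subseteq V(G)$ and $v,w\in X$, the vertices $v$ and $w$ are connected in $X$ if $v=w$, or if there are $z_0=v,\dots,z_I=w$ in $X$ with consecutive terms adjacent. - $\gamma_X(v)$ is the set of $w\in X$ connected to $v$ in $X$. - $\Gamma_\xi(v):=\gamma_{\xi^{-1}(\xi(v))}(v)$. **The quotient digraph.** For $\xi\in\mathcal{H}(G,H)$, $\mathcal{G}(\xi)$ is the digraph with: - vertex set $\{\Gamma_\xi(v):v\in V(G)\}$,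 a partition of $V(G)$; - arcs $\mathfrak{a}\mathfrak{b}$ whenever there are $a\in\mathfrak{a}$, $b\in\mathfrak{b}$ with $ab\in A(G)$. *)

theory Defs
  imports Main "HOL-Library.FuncSet"
begin

type_synonym 'a digraph = "'a set \<times> ('a \<times> 'a) set"

definition verts :: "'a digraph \<Rightarrow> 'a set" where "verts G = fst G"
definition arcs :: "'a digraph \<Rightarrow> ('a \<times> 'a) set" where "arcs G = snd G"

definition is_digraph :: "'a digraph \<Rightarrow> bool" where
  "is_digraph G \<longleftrightarrow> finite (verts G) \<and> verts G \<noteq> {} \<and> arcs G \<subseteq> verts G \<times> verts G"

definition homs :: "'a digraph \<Rightarrow> 'b digraph \<Rightarrow> ('a \<Rightarrow> 'b) set" where
  "homs G H = {\<xi> \<in> verts G \<rightarrow>\<^sub>E verts H. \<forall>(v,w)\<in>arcs G. (\<xi> v, \<xi> w) \<in> arcs H}"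

definition strict_homs :: "'a digraph \<Rightarrow> 'b digraph \<Rightarrow> ('a \<Rightarrow> 'b) set" where
  "strict_homs G H = {\<xi> \<in> homs G H. \<forall>(v,w)\<in>arcs G. v \<noteq> w \<longrightarrow> \<xi> v \<noteq> \<xi> w}"

definition adj_in :: "'a digraph \<Rightarrow> 'a set \<Rightarrow> ('a \<times> 'a) set" where
  "adj_in G X = {(u,w). u \<in> X \<and> w \<in> X \<and> ((u,w) \<in> arcs G \<or> (w,u) \<in> arcs G)}"

definition connected_in :: "'a digraph \<Rightarrow> 'a set \<Rightarrow> 'a \<Rightarrow> 'a \<Rightarrow> bool" where
  "connected_in G X v w \<longleftrightarrow> v \<in> X \<and> w \<in> X \<and> (v,w) \<in> (adj_in G X)\<^sup>*"

definition gamma :: "'a digraph \<Rightarrow> 'a set \<Rightarrow> 'a \<Rightarrow> 'a set" where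
  "gamma G X v = {w \<in> X. connected_in G X v w}"

definition Gamma :: "'a digraph \<Rightarrow> ('a \<Rightarrow> 'b) \<Rightarrow> 'a \<Rightarrow> 'a set" where
  "Gamma G \<xi> v = gamma G {u \<in> verts G. \<xi> u = \<xi> v} v"

definition quot :: "'a digraph \<Rightarrow> ('a \<Rightarrow> 'b) \<Rightarrow> 'a set digraph" where
  "quot G \<xi> = (Gamma G \<xi> ` verts G,
     {(\<aa>, \<bb>). \<aa> \<in> Gamma G \<xi> ` verts G \<and> \<bb> \<in> Gamma G \<xi> ` verts G \<and>
        (\<exists>a\<in>\<aa>. \<exists>b\<in>\<bb>. (a,b) \<in> arcs G)})"

end

theory Submission
  imports Defs
begin

text \<open>The blocks of the quotient depend on \<open>\<zeta>\<close> only through the set of arcs that \<open>\<zeta>\<close> collapses,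
  so \<open>\<zeta>\<close> has the same quotient as \<open>\<xi>\<close> iff it collapses exactly the arcs collapsed by \<open>\<xi>\<close>.
  Such a \<open>\<zeta>\<close> is constant on the blocks of \<open>\<xi>\<close>, hence factors uniquely as \<open>\<sigma> \<circ> \<Gamma>\<^sub>\<xi>\<close>; the factor
  \<open>\<sigma>\<close> is a homomorphism of the quotient which is strict precisely because \<open>\<zeta>\<close> collapses no
  arc joining two different blocks. Thus \<open>\<sigma> \<mapsto> \<sigma> \<circ> \<Gamma>\<^sub>\<xi>\<close> is a bijection from the strict
  homomorphisms of the quotient onto \<open>\<Theta>\<close>.\<close>

lemma Gamma_self: "v \<in> verts G \<Longrightarrow> v \<in> Gamma G f v"
  by (simp add: Gamma_def gamma_def connected_in_def)

lemma Gamma_fiber: "w \<in> Gamma G f v \<Longrightarrow> f w = f v"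
  by (auto simp: Gamma_def gamma_def)

lemma sym_adj_in: "sym (adj_in G X)"
  by (auto simp: adj_in_def intro: symI)

lemma Gamma_eq:
  assumes "w \<in> Gamma G f v"
  shows "Gamma G f w = Gamma G f v"
proof -
  let ?X = "{u \<in> verts G. f u = f v}"
  have "f w = f v" using Gamma_fiber[OF assms] .
  moreover have vw: "(v, w) \<in> (adj_in G ?X)\<^sup>*" and "v \<in> ?X"
    using assms by (auto simp: Gamma_def gamma_def connected_in_def)
  moreover have "(w, v) \<in> (adj_in G ?X)\<^sup>*"
    using sym_rtrancl[OF sym_adj_in] vw by (rule symD)
  ultimately show ?thesis
    using assms by (auto simp: Gamma_def gamma_def connected_in_def intro: rtrancl_trans)
qed

lemma Gamma_eq_iff_arc:
  assumes "arcs G \<subseteq> verts G \<times> verts G" and ab: "(a, b) \<in> arcs G"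
  shows "Gamma G f a = Gamma G f b \<longleftrightarrow> f a = f b"
proof
  assume "Gamma G f a = Gamma G f b"
  then show "f a = f b"
    using Gamma_self[of b G f] Gamma_fiber[of b G f a] assms by auto
next
  assume "f a = f b"
  then have "b \<in> Gamma G f a"
    using assms by (auto simp: Gamma_def gamma_def connected_in_def adj_in_def intro!: r_into_rtrancl)
  then show "Gamma G f a = Gamma G f b" using Gamma_eq[of b G f a] by simp
qed

lemma Gamma_mono_collapsed:
  assumes collapse: "\<And>a b. (a, b) \<in> arcs G \<Longrightarrow> f a = f b \<Longrightarrow> g a = g b"
    and v: "v \<in> verts G"
  shows "Gamma G f v \<subseteq> Gamma G g v"
proof
  let ?Xf = "{u \<in> verts G. f u = f v}"
  let ?Xg = "{u \<in> verts G. g u = g v}"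
  fix w assume "w \<in> Gamma G f v"
  then have "(v, w) \<in> (adj_in G ?Xf)\<^sup>*" by (auto simp: Gamma_def gamma_def connected_in_def)
  then have "w \<in> ?Xg \<and> (v, w) \<in> (adj_in G ?Xg)\<^sup>*"
  proof (induction rule: rtrancl_induct)
    case base
    then show ?case using v by simp
  next
    case (step y z)
    then have "y \<in> ?Xf" "z \<in> ?Xf" "(y, z) \<in> arcs G \<or> (z, y) \<in> arcs G"
      by (auto simp: adj_in_def)
    then have "g y = g z" using collapse by fastforce
    then have "z \<in> ?Xg" using step \<open>z \<in> ?Xf\<close> by auto
    then have "(y, z) \<in> adj_in G ?Xg" using step by (auto simp: adj_in_def)
    then show ?case using step \<open>z \<in> ?Xg\<close> by (meson rtrancl_into_rtrancl)
  qed
  then show "w \<in> Gamma G g v" using v by (auto simp: Gamma_def gamma_def connected_in_def)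
qed

lemma verts_quot: "verts (quot G f) = Gamma G f ` verts G"
  by (simp add: quot_def verts_def)

lemma quot_eq_iff_Gamma_eq:
  "quot G g = quot G f \<longleftrightarrow> (\<forall>v \<in> verts G. Gamma G g v = Gamma G f v)"
proof
  assume "quot G g = quot G f"
  then have blocks: "Gamma G g ` verts G = Gamma G f ` verts G"
    by (simp add: quot_def)
  show "\<forall>v \<in> verts G. Gamma G g v = Gamma G f v"
  proof
    fix v assume v: "v \<in> verts G"
    then obtain u where u: "Gamma G g v = Gamma G f u" using blocks by blast
    then have "v \<in> Gamma G f u" using Gamma_self[OF v, of g] by simp
    then show "Gamma G g v = Gamma G f v" using u Gamma_eq[of v G f u] by simp
  qed
next
  assume "\<forall>v \<in> verts G. Gamma G g v = Gamma G f v"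
  then have "Gamma G g ` verts G = Gamma G f ` verts G" by (auto intro!: image_cong)
  then show "quot G g = quot G f" by (simp add: quot_def)
qed

lemma quot_eq_iff_collapsed_arcs:
  assumes arcs: "arcs G \<subseteq> verts G \<times> verts G"
  shows "quot G g = quot G f \<longleftrightarrow> (\<forall>(a, b) \<in> arcs G. g a = g b \<longleftrightarrow> f a = f b)"
proof
  assume "quot G g = quot G f"
  then have same_Gamma: "\<forall>v \<in> verts G. Gamma G g v = Gamma G f v"
    by (simp add: quot_eq_iff_Gamma_eq)
  have "g a = g b \<longleftrightarrow> f a = f b" if ab: "(a, b) \<in> arcs G" for a b
  proof -
    have "a \<in> verts G" "b \<in> verts G" using ab arcs by auto
    then have "Gamma G g a = Gamma G g b \<longleftrightarrow> Gamma G f a = Gamma G f b"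
      using same_Gamma by simp
    then show ?thesis
      using Gamma_eq_iff_arc[OF arcs ab, of g] Gamma_eq_iff_arc[OF arcs ab, of f] by simp
  qed
  then show "\<forall>(a, b) \<in> arcs G. g a = g b \<longleftrightarrow> f a = f b" by blast
next
  assume "\<forall>(a, b) \<in> arcs G. g a = g b \<longleftrightarrow> f a = f b"
  then have gf: "g a = g b \<Longrightarrow> f a = f b" and fg: "f a = f b \<Longrightarrow> g a = g b"
    if "(a, b) \<in> arcs G" for a b
    using that by auto
  have "Gamma G g v = Gamma G f v" if "v \<in> verts G" for v
    using Gamma_mono_collapsed[OF gf that] Gamma_mono_collapsed[OF fg that] by (rule subset_antisym)
  then show "quot G g = quot G f" by (simp add: quot_eq_iff_Gamma_eq)
qed

lemma Gamma_const_if_quot_eq: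
  assumes arcs: "arcs G \<subseteq> verts G \<times> verts G" and same_quot: "quot G \<zeta> = quot G f"
    and v: "v \<in> verts G" and w: "w \<in> Gamma G f v"
  shows "\<zeta> w = \<zeta> v"
proof -
  have "\<forall>(a, b) \<in> arcs G. \<zeta> a = \<zeta> b \<longleftrightarrow> f a = f b"
    using same_quot by (simp add: quot_eq_iff_collapsed_arcs[OF arcs])
  then have "\<zeta> a = \<zeta> b" if "(a, b) \<in> arcs G" "f a = f b" for a b
    using that by fast
  then have "w \<in> Gamma G \<zeta> v" using Gamma_mono_collapsed[of G f \<zeta>, OF _ v] w by blast
  then show ?thesis by (rule Gamma_fiber)
qed

lemma arcs_quot:
  assumes arcs: "arcs G \<subseteq> verts G \<times> verts G"
  shows "(A, B) \<in> arcs (quot G f) \<longleftrightarrow> (\<exists>(a, b) \<in> arcs G. A = Gamma G f a \<and> B = Gamma G f b)"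
proof
  have block_of_member: "A = Gamma G f a" if A: "A \<in> Gamma G f ` verts G" and a: "a \<in> A" for A a
  proof -
    obtain u where "A = Gamma G f u" using A by blast
    then show ?thesis using a Gamma_eq[of a G f u] by simp
  qed
  assume "(A, B) \<in> arcs (quot G f)"
  then obtain a b where "(a, b) \<in> arcs G" "a \<in> A" "b \<in> B" "A \<in> Gamma G f ` verts G"
    "B \<in> Gamma G f ` verts G"
    by (auto simp: quot_def arcs_def)
  then show "\<exists>(a, b) \<in> arcs G. A = Gamma G f a \<and> B = Gamma G f b"
    using block_of_member by blast
next
  assume "\<exists>(a, b) \<in> arcs G. A = Gamma G f a \<and> B = Gamma G f b"
  then obtain a b where ab: "(a, b) \<in> arcs G" and "A = Gamma G f a" "B = Gamma G f b"
    by blast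
  moreover have "a \<in> verts G" "b \<in> verts G" using ab arcs by auto
  ultimately show "(A, B) \<in> arcs (quot G f)"
    using Gamma_self[of a G f] Gamma_self[of b G f] by (auto simp: quot_def arcs_def)
qed

lemma ball_arcs_quot:
  assumes "arcs G \<subseteq> verts G \<times> verts G"
  shows "(\<forall>(A, B) \<in> arcs (quot G f). P A B) \<longleftrightarrow> (\<forall>(a, b) \<in> arcs G. P (Gamma G f a) (Gamma G f b))"
proof
  assume P: "\<forall>(A, B) \<in> arcs (quot G f). P A B"
  show "\<forall>(a, b) \<in> arcs G. P (Gamma G f a) (Gamma G f b)"
  proof clarify
    fix a b assume "(a, b) \<in> arcs G"
    then have "(Gamma G f a, Gamma G f b) \<in> arcs (quot G f)" using arcs_quot[OF assms] by blast
    then show "P (Gamma G f a) (Gamma G f b)" using P by blast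
  qed
next
  assume P: "\<forall>(a, b) \<in> arcs G. P (Gamma G f a) (Gamma G f b)"
  show "\<forall>(A, B) \<in> arcs (quot G f). P A B"
  proof clarify
    fix A B assume "(A, B) \<in> arcs (quot G f)"
    then have "\<exists>(a, b) \<in> arcs G. A = Gamma G f a \<and> B = Gamma G f b"
      by (simp add: arcs_quot[OF assms])
    then obtain a b where "(a, b) \<in> arcs G" "A = Gamma G f a" "B = Gamma G f b"
      by blast
    then show "P A B" using P by blast
  qed
qed

lemma strict_homs_quot_iff:
  assumes arcs: "arcs G \<subseteq> verts G \<times> verts G"
  shows "\<sigma> \<in> strict_homs (quot G f) H \<longleftrightarrow> \<sigma> \<in> Gamma G f ` verts G \<rightarrow>\<^sub>E verts H \<and>
    (\<forall>(a, b) \<in> arcs G. (\<sigma> (Gamma G f a), \<sigma> (Gamma G f b)) \<in> arcs H) \<and>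
    (\<forall>(a, b) \<in> arcs G. f a \<noteq> f b \<longrightarrow> \<sigma> (Gamma G f a) \<noteq> \<sigma> (Gamma G f b))"
proof -
  have "(\<forall>(a, b) \<in> arcs G. Gamma G f a \<noteq> Gamma G f b \<longrightarrow> \<sigma> (Gamma G f a) \<noteq> \<sigma> (Gamma G f b)) \<longleftrightarrow>
    (\<forall>(a, b) \<in> arcs G. f a \<noteq> f b \<longrightarrow> \<sigma> (Gamma G f a) \<noteq> \<sigma> (Gamma G f b))"
    using Gamma_eq_iff_arc[OF arcs, of _ _ f] by (intro ball_cong) auto
  then show ?thesis
    by (simp add: strict_homs_def homs_def verts_quot ball_arcs_quot[OF arcs])
qed

definition quot_lift :: "'a digraph \<Rightarrow> ('a \<Rightarrow> 'b) \<Rightarrow> ('a set \<Rightarrow> 'c) \<Rightarrow> 'a \<Rightarrow> 'c" where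
  "quot_lift G f \<sigma> = (\<lambda>v \<in> verts G. \<sigma> (Gamma G f v))"

definition quot_descend :: "'a digraph \<Rightarrow> ('a \<Rightarrow> 'b) \<Rightarrow> ('a \<Rightarrow> 'c) \<Rightarrow> 'a set \<Rightarrow> 'c" where
  "quot_descend G f \<zeta> = (\<lambda>A \<in> Gamma G f ` verts G. \<zeta> (SOME a. a \<in> A))"

lemma inj_on_quot_lift: "inj_on (quot_lift G f) (Gamma G f ` verts G \<rightarrow>\<^sub>E X)"
proof (rule inj_onI)
  fix \<sigma> \<tau> assume \<sigma>: "\<sigma> \<in> Gamma G f ` verts G \<rightarrow>\<^sub>E X" and \<tau>: "\<tau> \<in> Gamma G f ` verts G \<rightarrow>\<^sub>E X"
    and eq: "quot_lift G f \<sigma> = quot_lift G f \<tau>"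
  have "\<sigma> (Gamma G f v) = \<tau> (Gamma G f v)" if "v \<in> verts G" for v
    using fun_cong[OF eq, of v] that by (simp add: quot_lift_def)
  then show "\<sigma> = \<tau>"
    using \<sigma> \<tau> by (intro extensionalityI[of _ "Gamma G f ` verts G"]) (auto simp: PiE_iff)
qed

lemma quot_descend_Gamma:
  assumes v: "v \<in> verts G" and const: "\<And>w. w \<in> Gamma G f v \<Longrightarrow> \<zeta> w = \<zeta> v"
  shows "quot_descend G f \<zeta> (Gamma G f v) = \<zeta> v"
proof -
  have "(SOME a. a \<in> Gamma G f v) \<in> Gamma G f v" using Gamma_self[OF v] by (rule someI)
  then show ?thesis using v const by (simp add: quot_descend_def)
qed

lemma quot_lift_descend:
  assumes "\<zeta> \<in> extensional (verts G)"
    and "\<And>v w. v \<in> verts G \<Longrightarrow> w \<in> Gamma G f v \<Longrightarrow> \<zeta> w = \<zeta> v"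
  shows "quot_lift G f (quot_descend G f \<zeta>) = \<zeta>"
proof (rule extensionalityI[of _ "verts G"])
  fix v assume "v \<in> verts G"
  then show "quot_lift G f (quot_descend G f \<zeta>) v = \<zeta> v"
    using assms(2) quot_descend_Gamma[of v G f \<zeta>] by (simp add: quot_lift_def)
qed (use assms(1) in \<open>auto simp: quot_lift_def\<close>)

lemma quot_lift_strict_hom:
  assumes arcs: "arcs G \<subseteq> verts G \<times> verts G" and \<sigma>: "\<sigma> \<in> strict_homs (quot G f) H"
  shows "quot_lift G f \<sigma> \<in> homs G H" and "quot G (quot_lift G f \<sigma>) = quot G f"
proof -
  have ext: "\<sigma> \<in> Gamma G f ` verts G \<rightarrow>\<^sub>E verts H"
    and hom: "\<And>a b. (a, b) \<in> arcs G \<Longrightarrow> (\<sigma> (Gamma G f a), \<sigma> (Gamma G f b)) \<in> arcs H"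
    and strict: "\<And>a b. (a, b) \<in> arcs G \<Longrightarrow> f a \<noteq> f b \<Longrightarrow> \<sigma> (Gamma G f a) \<noteq> \<sigma> (Gamma G f b)"
    using \<sigma> by (auto simp: strict_homs_quot_iff[OF arcs])
  show "quot_lift G f \<sigma> \<in> homs G H"
    using ext hom arcs by (auto simp: homs_def quot_lift_def)
  have "quot_lift G f \<sigma> a = quot_lift G f \<sigma> b \<longleftrightarrow> f a = f b" if "(a, b) \<in> arcs G" for a b
  proof -
    have "a \<in> verts G" "b \<in> verts G" using that arcs by auto
    then have "quot_lift G f \<sigma> a = quot_lift G f \<sigma> b \<longleftrightarrow> \<sigma> (Gamma G f a) = \<sigma> (Gamma G f b)"
      by (simp add: quot_lift_def)
    also have "\<dots> \<longleftrightarrow> f a = f b"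
      using strict[OF that] Gamma_eq_iff_arc[OF arcs that, of f] by auto
    finally show ?thesis .
  qed
  then show "quot G (quot_lift G f \<sigma>) = quot G f"
    by (auto simp: quot_eq_iff_collapsed_arcs[OF arcs])
qed

lemma quot_descend_strict_hom:
  assumes arcs: "arcs G \<subseteq> verts G \<times> verts G"
    and \<zeta>: "\<zeta> \<in> homs G H" and same_quot: "quot G \<zeta> = quot G f"
  shows "quot_descend G f \<zeta> \<in> strict_homs (quot G f) H"
    and "quot_lift G f (quot_descend G f \<zeta>) = \<zeta>"
proof -
  have \<zeta>_PiE: "\<zeta> \<in> verts G \<rightarrow>\<^sub>E verts H"
    and \<zeta>_arc: "\<And>a b. (a, b) \<in> arcs G \<Longrightarrow> (\<zeta> a, \<zeta> b) \<in> arcs H"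
    using \<zeta> by (auto simp: homs_def)
  have same: "\<zeta> a = \<zeta> b \<longleftrightarrow> f a = f b" if "(a, b) \<in> arcs G" for a b
    using same_quot that by (simp add: quot_eq_iff_collapsed_arcs[OF arcs]) fast
  note const = Gamma_const_if_quot_eq[OF arcs same_quot]
  have descend: "quot_descend G f \<zeta> (Gamma G f v) = \<zeta> v" if v: "v \<in> verts G" for v
    using quot_descend_Gamma[of v G f \<zeta>, OF v const[OF v]] .
  have "quot_descend G f \<zeta> \<in> Gamma G f ` verts G \<rightarrow>\<^sub>E verts H"
  proof (rule PiE_I)
    fix A assume "A \<in> Gamma G f ` verts G"
    then obtain v where "v \<in> verts G" "A = Gamma G f v" by blast
    then show "quot_descend G f \<zeta> A \<in> verts H" using descend PiE_mem[OF \<zeta>_PiE] by simp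
  qed (simp add: quot_descend_def)
  moreover have "(quot_descend G f \<zeta> (Gamma G f a), quot_descend G f \<zeta> (Gamma G f b)) \<in> arcs H"
    and "f a \<noteq> f b \<Longrightarrow> quot_descend G f \<zeta> (Gamma G f a) \<noteq> quot_descend G f \<zeta> (Gamma G f b)"
    if ab: "(a, b) \<in> arcs G" for a b
  proof -
    have "a \<in> verts G" "b \<in> verts G" using ab arcs by auto
    then show "(quot_descend G f \<zeta> (Gamma G f a), quot_descend G f \<zeta> (Gamma G f b)) \<in> arcs H"
      and "f a \<noteq> f b \<Longrightarrow> quot_descend G f \<zeta> (Gamma G f a) \<noteq> quot_descend G f \<zeta> (Gamma G f b)"
      using \<zeta>_arc[OF ab] same[OF ab] descend by simp_all
  qed
  ultimately show "quot_descend G f \<zeta> \<in> strict_homs (quot G f) H"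
    unfolding strict_homs_quot_iff[OF arcs] by auto
  show "quot_lift G f (quot_descend G f \<zeta>) = \<zeta>"
    using \<zeta>_PiE const by (intro quot_lift_descend) (auto simp: PiE_iff)
qed

lemma bij_betw_quot_lift:
  assumes arcs: "arcs G \<subseteq> verts G \<times> verts G"
  shows "bij_betw (quot_lift G f) (strict_homs (quot G f) H) {\<zeta> \<in> homs G H. quot G \<zeta> = quot G f}"
proof (rule bij_betw_imageI)
  have "strict_homs (quot G f) H \<subseteq> Gamma G f ` verts G \<rightarrow>\<^sub>E verts H"
    by (auto simp: strict_homs_def homs_def verts_quot)
  then show "inj_on (quot_lift G f) (strict_homs (quot G f) H)"
    by (rule inj_on_subset[OF inj_on_quot_lift])
  show "quot_lift G f ` strict_homs (quot G f) H = {\<zeta> \<in> homs G H. quot G \<zeta> = quot G f}"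
  proof
    show "quot_lift G f ` strict_homs (quot G f) H \<subseteq> {\<zeta> \<in> homs G H. quot G \<zeta> = quot G f}"
      using quot_lift_strict_hom[OF arcs] by blast
  next
    show "{\<zeta> \<in> homs G H. quot G \<zeta> = quot G f} \<subseteq> quot_lift G f ` strict_homs (quot G f) H"
    proof
      fix \<zeta> assume "\<zeta> \<in> {\<zeta> \<in> homs G H. quot G \<zeta> = quot G f}"
      then have \<zeta>: "\<zeta> \<in> homs G H" and same_quot: "quot G \<zeta> = quot G f" by simp_all
      show "\<zeta> \<in> quot_lift G f ` strict_homs (quot G f) H"
        using quot_descend_strict_hom(2)[OF arcs \<zeta> same_quot, symmetric]
          quot_descend_strict_hom(1)[OF arcs \<zeta> same_quot]
        by (rule image_eqI)
    qed
  qed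
qed

theorem lemma3:
  fixes G :: "'a digraph" and H :: "'b digraph" and H' :: "'c digraph" and \<xi> :: "'a \<Rightarrow> 'b"
  assumes "is_digraph G" and "is_digraph H" and "is_digraph H'"
    and "\<xi> \<in> homs G H"
  shows "card {\<zeta> \<in> homs G H'. quot G \<zeta> = quot G \<xi>} = card (strict_homs (quot G \<xi>) H')"
proof -
  have "arcs G \<subseteq> verts G \<times> verts G" using assms(1) by (simp add: is_digraph_def)
  then have "bij_betw (quot_lift G \<xi>) (strict_homs (quot G \<xi>) H')
      {\<zeta> \<in> homs G H'. quot G \<zeta> = quot G \<xi>}"
    by (rule bij_betw_quot_lift)
  then show ?thesis by (simp add: bij_betw_same_card)
qed

end
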